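(* Let $K,F,Z,S,u$ be positive integers and let $\mathbf{P}$ be a $(K,F,Z,S)$ placement delivery array (PDA). Then the $F\times uK$ array $[\mathbf{P}\,|\,\mathbf{P}\,|\,\cdots\,|\,\mathbf{P}]$ obtained by placing $u$ copies of $\mathbf{P}$ side by side is a $(uK,u,F,Z,S)$ EPDA.
   Context: Notation: $[n]=\{1,\dots,n\}$. PDA: an $F\times K$ array $\mathbf{P}=[p_{j,k}]$ with entries either a symbol $\star$ or integers in $[S]$ is a $(K,F,Z,S)$ PDA if: (D1) $\star$ appears exactly $Z$ times in each column; (D2) each integer in $[S]$ occurs at least once; (D3) for any two distinct entries with $p_{j_1,k_1}=p_{j_2,k_2}=s$ an integer, we have $j_1\neq j_2$, $k_1\neq k_2$, and $p_{j_1,k_2}=p_{j_2,k_1}=\star$. EPDA: an $F\times K$ array $\mathbf{A}=[a_{j,k}]$ with entries either $\star$ or integers in $[S]$ is a $(K,L,F,Z,S)$ EPDA (where $L\le K$ is a positive integer) if: (C1) $\star$ appears exactly $Z$ times in each column; (C2) every integer in $[S]$ occurs at least once; (C3) no integer appears more than once in any column; (C4) for each $s\in[S]$, letting $\mathbf{A}^{(s)}$ be the subarray obtained by deleting all rows and columns of $\mathbf{A}$ not containing $s$, no row of $\mathbf{A}^{(s)}$ contains more than $L$ integer entries. *)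

theory Defs
  imports Main
begin

text \<open>An F x K array with entries star or integers in [S] is modelled as a function
  A :: nat => nat => nat option, where A j k is the entry in row j (1 <= j <= F)
  and column k (1 <= k <= K); None denotes the symbol star, Some s the integer s.
  Values outside the index ranges are irrelevant.\<close>

definition is_PDA :: "nat \<Rightarrow> nat \<Rightarrow> nat \<Rightarrow> nat \<Rightarrow> (nat \<Rightarrow> nat \<Rightarrow> nat option) \<Rightarrow> bool" where
  "is_PDA K F Z S P \<longleftrightarrow>
     (\<forall>j\<in>{1..F}. \<forall>k\<in>{1..K}. \<forall>s. P j k = Some s \<longrightarrow> s \<in> {1..S}) \<and>
     (\<forall>k\<in>{1..K}. card {j\<in>{1..F}. P j k = None} = Z) \<and>
     (\<forall>s\<in>{1..S}. \<exists>j\<in>{1..F}. \<exists>k\<in>{1..K}. P j k = Some s) \<and>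
     (\<forall>j1\<in>{1..F}. \<forall>k1\<in>{1..K}. \<forall>j2\<in>{1..F}. \<forall>k2\<in>{1..K}. \<forall>s.
        (j1, k1) \<noteq> (j2, k2) \<and> P j1 k1 = Some s \<and> P j2 k2 = Some s \<longrightarrow>
        j1 \<noteq> j2 \<and> k1 \<noteq> k2 \<and> P j1 k2 = None \<and> P j2 k1 = None)"

definition is_EPDA :: "nat \<Rightarrow> nat \<Rightarrow> nat \<Rightarrow> nat \<Rightarrow> nat \<Rightarrow> (nat \<Rightarrow> nat \<Rightarrow> nat option) \<Rightarrow> bool" where
  "is_EPDA K L F Z S A \<longleftrightarrow>
     0 < L \<and> L \<le> K \<and>
     (\<forall>j\<in>{1..F}. \<forall>k\<in>{1..K}. \<forall>s. A j k = Some s \<longrightarrow> s \<in> {1..S}) \<and>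
     (\<forall>k\<in>{1..K}. card {j\<in>{1..F}. A j k = None} = Z) \<and>
     (\<forall>s\<in>{1..S}. \<exists>j\<in>{1..F}. \<exists>k\<in>{1..K}. A j k = Some s) \<and>
     (\<forall>k\<in>{1..K}. \<forall>j1\<in>{1..F}. \<forall>j2\<in>{1..F}. \<forall>s.
        A j1 k = Some s \<and> A j2 k = Some s \<longrightarrow> j1 = j2) \<and>
     (\<forall>s\<in>{1..S}.
        let R = {j\<in>{1..F}. \<exists>k\<in>{1..K}. A j k = Some s};
            C = {k\<in>{1..K}. \<exists>j\<in>{1..F}. A j k = Some s}
        in \<forall>j\<in>R. card {k\<in>C. A j k \<noteq> None} \<le> L)"

text \<open>[P | P | ... | P] with u copies: column k (1 <= k <= uK) of the result is
  column ((k - 1) mod K) + 1 of P.\<close>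
definition hrepeat :: "nat \<Rightarrow> (nat \<Rightarrow> nat \<Rightarrow> nat option) \<Rightarrow> (nat \<Rightarrow> nat \<Rightarrow> nat option)" where
  "hrepeat K P = (\<lambda>j k. P j ((k - 1) mod K + 1))"

end

theory Submission
  imports Defs
begin

text \<open>A PDA is already an EPDA with \<open>L = 1\<close>: by (D3), a row meeting the symbol \<open>s\<close>
  carries a star in every other column containing \<open>s\<close>. Repeating an EPDA \<open>u\<close> times
  side by side preserves (C1)--(C3) column by column, while every column of the
  original array reappears exactly \<open>u\<close> times, which multiplies the bound in (C4) by \<open>u\<close>.\<close>

lemma hrepeat_column_in_range:
  fixes K k :: nat
  assumes "0 < K"
  shows "(k - 1) mod K + 1 \<in> {1..K}"
  using assms by (simp add: Suc_leI)

lemma hrepeat_column_id: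
  fixes K k :: nat
  assumes "k \<in> {1..K}"
  shows "(k - 1) mod K + 1 = k"
  using assms by auto

lemma card_hrepeat_preimage_le:
  fixes K u :: nat and X :: "nat set"
  assumes "0 < K" "finite X"
  shows "card {k\<in>{1..u*K}. (k - 1) mod K + 1 \<in> X} \<le> u * card X"
proof -
  let ?T = "{k\<in>{1..u*K}. (k - 1) mod K + 1 \<in> X}"
  let ?split = "\<lambda>k. ((k - 1) div K, (k - 1) mod K + 1)"
  have "inj_on ?split ?T"
  proof (rule inj_onI)
    fix x y assume "x \<in> ?T" "y \<in> ?T" and eq: "?split x = ?split y"
    have "x - 1 = (x - 1) div K * K + (x - 1) mod K" by simp
    also have "\<dots> = (y - 1) div K * K + (y - 1) mod K" using eq by simp
    also have "\<dots> = y - 1" by simp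
    finally have "x - 1 = y - 1" .
    moreover have "1 \<le> x" "1 \<le> y" using \<open>x \<in> ?T\<close> \<open>y \<in> ?T\<close> by auto
    ultimately show "x = y" by arith
  qed
  moreover have "?split ` ?T \<subseteq> {0..<u} \<times> X"
  proof -
    have "(k - 1) div K < u" if "k \<in> ?T" for k
    proof (rule less_mult_imp_div_less)
      show "k - 1 < u * K" using that by auto
    qed
    then show ?thesis by auto
  qed
  ultimately have "card ?T \<le> card ({0..<u} \<times> X)"
    using assms(2) by (intro card_inj_on_le) auto
  then show ?thesis by (simp add: card_cartesian_product)
qed

lemma is_PDA_imp_is_EPDA:
  assumes "0 < K" and P: "is_PDA K F Z S P"
  shows "is_EPDA K 1 F Z S P"
proof -
  have D3: "j1 \<noteq> j2 \<and> k1 \<noteq> k2 \<and> P j1 k2 = None \<and> P j2 k1 = None"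
    if "j1 \<in> {1..F}" "k1 \<in> {1..K}" "j2 \<in> {1..F}" "k2 \<in> {1..K}" "(j1, k1) \<noteq> (j2, k2)"
      "P j1 k1 = Some s" "P j2 k2 = Some s" for j1 k1 j2 k2 s
  proof -
    have "\<forall>j1\<in>{1..F}. \<forall>k1\<in>{1..K}. \<forall>j2\<in>{1..F}. \<forall>k2\<in>{1..K}. \<forall>s.
        (j1, k1) \<noteq> (j2, k2) \<and> P j1 k1 = Some s \<and> P j2 k2 = Some s \<longrightarrow>
        j1 \<noteq> j2 \<and> k1 \<noteq> k2 \<and> P j1 k2 = None \<and> P j2 k1 = None"
      using P unfolding is_PDA_def by (elim conjE) assumption
    from this[rule_format, OF that(1-4)] that(5-7) show ?thesis by blast
  qed
  have column_distinct: "j1 = j2"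
    if "k \<in> {1..K}" "j1 \<in> {1..F}" "j2 \<in> {1..F}" "P j1 k = Some s" "P j2 k = Some s"
    for k j1 j2 s
    using D3[of j1 k j2 k s] that by auto
  have single_column: "card {k\<in>{k\<in>{1..K}. \<exists>j'\<in>{1..F}. P j' k = Some s}. P j k \<noteq> None} \<le> 1"
    if row: "j \<in> {j\<in>{1..F}. \<exists>k0\<in>{1..K}. P j k0 = Some s}" for j s
  proof -
    obtain k0 where j: "j \<in> {1..F}" and k0: "k0 \<in> {1..K}" "P j k0 = Some s"
      using row by blast
    have "k = k0" if "k \<in> {1..K}" "j' \<in> {1..F}" "P j' k = Some s" "P j k \<noteq> None" for k j'
      using D3[of j k0 j' k s] j k0 that by auto
    then have "{k\<in>{k\<in>{1..K}. \<exists>j'\<in>{1..F}. P j' k = Some s}. P j k \<noteq> None} \<subseteq> {k0}"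
      by blast
    then have "card {k\<in>{k\<in>{1..K}. \<exists>j'\<in>{1..F}. P j' k = Some s}. P j k \<noteq> None} \<le> card {k0}"
      by (intro card_mono) simp_all
    then show ?thesis by simp
  qed
  show ?thesis
    unfolding is_EPDA_def Let_def
  proof (intro conjI)
    show "\<forall>j\<in>{1..F}. \<forall>k\<in>{1..K}. \<forall>s. P j k = Some s \<longrightarrow> s \<in> {1..S}"
      "\<forall>k\<in>{1..K}. card {j\<in>{1..F}. P j k = None} = Z"
      "\<forall>s\<in>{1..S}. \<exists>j\<in>{1..F}. \<exists>k\<in>{1..K}. P j k = Some s"
      using P unfolding is_PDA_def by blast+
    show "0 < (1::nat)" "1 \<le> K" using \<open>0 < K\<close> by simp_all
    show "\<forall>k\<in>{1..K}. \<forall>j1\<in>{1..F}. \<forall>j2\<in>{1..F}. \<forall>s.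
        P j1 k = Some s \<and> P j2 k = Some s \<longrightarrow> j1 = j2"
      using column_distinct by blast
    show "\<forall>s\<in>{1..S}. \<forall>j\<in>{j\<in>{1..F}. \<exists>k\<in>{1..K}. P j k = Some s}.
        card {k\<in>{k\<in>{1..K}. \<exists>j\<in>{1..F}. P j k = Some s}. P j k \<noteq> None} \<le> 1"
      using single_column by blast
  qed
qed

lemma is_EPDA_hrepeat:
  assumes "0 < u" and A: "is_EPDA K L F Z S A"
  shows "is_EPDA (u * K) (u * L) F Z S (hrepeat K A)"
proof -
  let ?col = "\<lambda>k::nat. (k - 1) mod K + 1"
  have "0 < L" "L \<le> K" using A unfolding is_EPDA_def by auto
  then have "0 < K" by simp
  have col_range: "?col k \<in> {1..K}" for k using \<open>0 < K\<close> by (rule hrepeat_column_in_range)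
  have some_copy: "\<exists>k\<in>{1..u*K}. ?col k = c" if "c \<in> {1..K}" for c
  proof
    show "c \<in> {1..u*K}" using that \<open>0 < u\<close> by (auto intro: order_trans[OF _ mult_le_mono1[of 1 u K]])
  qed (rule hrepeat_column_id[OF that])
  have has_symbol: "(\<exists>k\<in>{1..u*K}. A j (?col k) = Some s) \<longleftrightarrow> (\<exists>c\<in>{1..K}. A j c = Some s)"
    for j s
    using col_range some_copy by metis
  have A_range: "\<forall>j\<in>{1..F}. \<forall>k\<in>{1..K}. \<forall>s. A j k = Some s \<longrightarrow> s \<in> {1..S}"
    and A_stars: "\<forall>k\<in>{1..K}. card {j\<in>{1..F}. A j k = None} = Z"
    and A_occurs: "\<forall>s\<in>{1..S}. \<exists>j\<in>{1..F}. \<exists>k\<in>{1..K}. A j k = Some s"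
    and A_column: "\<forall>k\<in>{1..K}. \<forall>j1\<in>{1..F}. \<forall>j2\<in>{1..F}. \<forall>s.
        A j1 k = Some s \<and> A j2 k = Some s \<longrightarrow> j1 = j2"
    and A_rows: "\<forall>s\<in>{1..S}. \<forall>j\<in>{j\<in>{1..F}. \<exists>k\<in>{1..K}. A j k = Some s}.
        card {k\<in>{k\<in>{1..K}. \<exists>j\<in>{1..F}. A j k = Some s}. A j k \<noteq> None} \<le> L"
    using A unfolding is_EPDA_def Let_def by blast+
  have row_bound: "card {k\<in>{k\<in>{1..u*K}. \<exists>j'\<in>{1..F}. A j' (?col k) = Some s}. A j (?col k) \<noteq> None}
      \<le> u * L"
    if "s \<in> {1..S}" "j \<in> {1..F}" "\<exists>c\<in>{1..K}. A j c = Some s" for s j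
  proof -
    let ?X = "{c\<in>{c\<in>{1..K}. \<exists>j'\<in>{1..F}. A j' c = Some s}. A j c \<noteq> None}"
    have "card {k\<in>{k\<in>{1..u*K}. \<exists>j'\<in>{1..F}. A j' (?col k) = Some s}. A j (?col k) \<noteq> None}
        = card {k\<in>{1..u*K}. ?col k \<in> ?X}"
      using col_range by (intro arg_cong[where f = card]) auto
    also have "\<dots> \<le> u * card ?X"
      by (rule card_hrepeat_preimage_le[OF \<open>0 < K\<close>]) simp
    also have "\<dots> \<le> u * L"
      using A_rows that by simp
    finally show ?thesis .
  qed
  show ?thesis
    unfolding is_EPDA_def hrepeat_def Let_def
  proof (intro conjI)
    show "0 < u * L" "u * L \<le> u * K" using \<open>0 < u\<close> \<open>0 < L\<close> \<open>L \<le> K\<close> by simp_all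
    show "\<forall>j\<in>{1..F}. \<forall>k\<in>{1..u*K}. \<forall>s. A j (?col k) = Some s \<longrightarrow> s \<in> {1..S}"
      using A_range col_range by blast
    show "\<forall>k\<in>{1..u*K}. card {j\<in>{1..F}. A j (?col k) = None} = Z"
      using A_stars col_range by blast
    show "\<forall>s\<in>{1..S}. \<exists>j\<in>{1..F}. \<exists>k\<in>{1..u*K}. A j (?col k) = Some s"
      using A_occurs has_symbol by blast
    show "\<forall>k\<in>{1..u*K}. \<forall>j1\<in>{1..F}. \<forall>j2\<in>{1..F}. \<forall>s.
        A j1 (?col k) = Some s \<and> A j2 (?col k) = Some s \<longrightarrow> j1 = j2"
      using A_column col_range by blast
    show "\<forall>s\<in>{1..S}. \<forall>j\<in>{j\<in>{1..F}. \<exists>k\<in>{1..u*K}. A j (?col k) = Some s}.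
        card {k\<in>{k\<in>{1..u*K}. \<exists>j\<in>{1..F}. A j (?col k) = Some s}. A j (?col k) \<noteq> None}
          \<le> u * L"
      using row_bound has_symbol by blast
  qed
qed

theorem corollary1:
  fixes K F Z S u :: nat and P :: "nat \<Rightarrow> nat \<Rightarrow> nat option"
  assumes "0 < K" "0 < F" "0 < Z" "0 < S" "0 < u"
    and "is_PDA K F Z S P"
  shows "is_EPDA (u * K) u F Z S (hrepeat K P)"
  using is_EPDA_hrepeat[OF \<open>0 < u\<close> is_PDA_imp_is_EPDA[OF \<open>0 < K\<close> \<open>is_PDA K F Z S P\<close>]]
  by simp

end
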